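(* Let $G$ be a real $n\times m$ matrix and $\mathbf v\in\mathbb R^n$, and let $\mathcal G=\{x\in\mathbb R^m: Gx\le \mathbf v\}$ (componentwise). Let $P$ be the nonnegative orthant of $\mathbb R^n$ and $F=\mathcal R(G)$. Write $\mathbf v=\mathbf v_F+\upsilon$, where $\mathbf v_F$ is the orthogonal projection of $\mathbf v$ onto $F$ and $\upsilon$ is the orthogonal projection of $\mathbf v$ onto $F^\perp$. Assume $\upsilon\neq 0$ and $F\cap P=\{0\}$. Let $F_e=\mathrm{span}(\upsilon)+F$. Every $y\in F_e$ can be written uniquely as $y=\beta(y)\upsilon+z$ with $\beta(y)\in\mathbb R$ and $z\in F$. Then the following hold. 1. If $F_e\cap P\neq\{0\}$, then the sign of $\beta(y)$ is the same for all nonzero $y\in F_e\cap P$, and this sign is nonzero. 2. $\mathcal G\neq\emptyset$ if and only if $F_e\cap P\neq\{0\}$ and $\beta(y)>0$ for the nonzero $y\in F_e\cap P$.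
   Context: Uniqueness of the decomposition holds because $\upsilon\perp F$ and $\upsilon\ne0$. *)

theory Defs
  imports "HOL-Analysis.Analysis"
begin

definition orthant :: "(real ^ 'n) set" where
  "orthant = {y. \<forall>i. 0 \<le> y $ i}"

definition feasible :: "real ^ 'm ^ 'n \<Rightarrow> real ^ 'n \<Rightarrow> (real ^ 'm) set" where
  "feasible G v = {x. \<forall>i. (G *v x) $ i \<le> v $ i}"

definition ext_space :: "real ^ 'n \<Rightarrow> (real ^ 'n) set \<Rightarrow> (real ^ 'n) set" where
  "ext_space u F = {b *\<^sub>R u + z | b z. z \<in> F}"

definition beta_coeff :: "real ^ 'n \<Rightarrow> (real ^ 'n) set \<Rightarrow> real ^ 'n \<Rightarrow> real" where
  "beta_coeff u F y = (THE b. \<exists>z\<in>F. y = b *\<^sub>R u + z)"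

end

theory Submission
  imports Defs
begin

text \<open>
  Since \<open>u \<notin> F\<close>, every vector of \<open>ext_space u F\<close> has a unique coefficient \<open>\<beta>\<close> along \<open>u\<close>.
  On the nonzero vectors of \<open>ext_space u F \<inter> orthant\<close> it cannot vanish, because
  \<open>F \<inter> orthant = {0}\<close>; nor can it take both signs, since a positive combination of
  two such vectors with opposite signs of \<open>\<beta>\<close> cancels \<open>u\<close> and gives a nonzero vector of
  \<open>F \<inter> orthant\<close>. Finally \<open>G x \<le> v\<close> means that the slack \<open>v - G x\<close> is a nonnegative
  vector of the affine space \<open>v + F = u + F\<close>, which is the slice \<open>\<beta> = 1\<close> of \<open>ext_space u F\<close>;
  by scaling, this slice meets the orthant iff some slice \<open>\<beta> > 0\<close> does.
\<close>

lemma ext_spaceE: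
  assumes "y \<in> ext_space u F"
  obtains b z where "z \<in> F" "y = b *\<^sub>R u + z"
  using assms unfolding ext_space_def by blast

lemma ext_spaceI: "z \<in> F \<Longrightarrow> b *\<^sub>R u + z \<in> ext_space u F"
  unfolding ext_space_def by blast

lemma beta_coeff_eq:
  assumes F: "subspace F" and u: "u \<notin> F" and z: "z \<in> F"
  shows "beta_coeff u F (b *\<^sub>R u + z) = b"
  unfolding beta_coeff_def
proof (rule the_equality)
  show "\<exists>z'\<in>F. b *\<^sub>R u + z = b *\<^sub>R u + z'"
    using z by blast
next
  fix b' assume "\<exists>z'\<in>F. b *\<^sub>R u + z = b' *\<^sub>R u + z'"
  then obtain z' where z': "z' \<in> F" "b *\<^sub>R u + z = b' *\<^sub>R u + z'"
    by blast
  have "(b - b') *\<^sub>R u = z' - z"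
    using z'(2) by (simp add: algebra_simps)
  also have "\<dots> \<in> F"
    using F z z'(1) by (simp add: subspace_diff)
  finally have in_F: "(b - b') *\<^sub>R u \<in> F" .
  show "b' = b"
  proof (rule ccontr)
    assume "b' \<noteq> b"
    then have "u = inverse (b - b') *\<^sub>R ((b - b') *\<^sub>R u)"
      by simp
    with F in_F have "u \<in> F"
      by (metis subspace_scale)
    with u show False
      by contradiction
  qed
qed

lemma beta_coeff_zero:
  assumes "subspace F" "u \<notin> F"
  shows "beta_coeff u F 0 = 0"
  using beta_coeff_eq[OF assms subspace_0[OF assms(1)], of 0] by simp

lemma orthant_scaleR: "y \<in> orthant \<Longrightarrow> 0 \<le> c \<Longrightarrow> c *\<^sub>R y \<in> orthant"
  unfolding orthant_def by simp

lemma orthant_add: "y \<in> orthant \<Longrightarrow> y' \<in> orthant \<Longrightarrow> y + y' \<in> orthant"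
  unfolding orthant_def by simp

lemma orthant_nonzero_add:
  assumes "y \<in> orthant" "y \<noteq> 0" "y' \<in> orthant"
  shows "y + y' \<noteq> 0"
proof -
  obtain i where "y $ i \<noteq> 0"
    using assms(2) by (metis vec_eq_iff zero_index)
  with assms(1) have "y $ i > 0"
    unfolding orthant_def by (simp add: less_le)
  with assms(3) have "(y + y') $ i > 0"
    unfolding orthant_def by (simp add: add_pos_nonneg)
  then show ?thesis
    by (metis less_irrefl zero_index)
qed

lemma beta_coeff_nonzero:
  assumes F: "subspace F" and u: "u \<notin> F" and FP: "F \<inter> orthant = {0}"
    and y: "y \<in> ext_space u F \<inter> orthant - {0}"
  shows "beta_coeff u F y \<noteq> 0"
proof
  assume b0: "beta_coeff u F y = 0"
  obtain b z where z: "z \<in> F" and yz: "y = b *\<^sub>R u + z"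
    using y by (blast elim: ext_spaceE)
  with b0 beta_coeff_eq[OF F u z] have "y \<in> F"
    by simp
  with y FP show False
    by blast
qed

lemma beta_coeff_sign_constant:
  assumes F: "subspace F" and u: "u \<notin> F" and FP: "F \<inter> orthant = {0}"
  shows "(\<forall>y \<in> ext_space u F \<inter> orthant - {0}. beta_coeff u F y > 0) \<or>
         (\<forall>y \<in> ext_space u F \<inter> orthant - {0}. beta_coeff u F y < 0)"
proof (rule ccontr)
  assume "\<not> ?thesis"
  then obtain y1 y2
    where y1: "y1 \<in> ext_space u F \<inter> orthant - {0}" "\<not> beta_coeff u F y1 > 0"
      and y2: "y2 \<in> ext_space u F \<inter> orthant - {0}" "\<not> beta_coeff u F y2 < 0"
    by blast
  obtain b1 z1 where z1: "z1 \<in> F" and y1_eq: "y1 = b1 *\<^sub>R u + z1"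
    using y1(1) by (blast elim: ext_spaceE)
  obtain b2 z2 where z2: "z2 \<in> F" and y2_eq: "y2 = b2 *\<^sub>R u + z2"
    using y2(1) by (blast elim: ext_spaceE)
  have "b1 \<noteq> 0" "\<not> b1 > 0" "b2 \<noteq> 0" "\<not> b2 < 0"
    using y1 y2 beta_coeff_nonzero[OF F u FP] beta_coeff_eq[OF F u z1] beta_coeff_eq[OF F u z2]
    unfolding y1_eq y2_eq by auto
  then have "b1 < 0" "b2 > 0"
    by auto
  define y where "y = b2 *\<^sub>R y1 + (- b1) *\<^sub>R y2"
  have "y = b2 *\<^sub>R z1 + (- b1) *\<^sub>R z2"
    unfolding y_def y1_eq y2_eq by (simp add: algebra_simps)
  then have "y \<in> F"
    using F z1 z2 by (simp add: subspace_diff subspace_scale)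
  moreover have "y \<in> orthant"
    unfolding y_def using y1 y2 \<open>b1 < 0\<close> \<open>b2 > 0\<close>
    by (intro orthant_add orthant_scaleR) auto
  moreover have "y \<noteq> 0"
    unfolding y_def using y1 y2 \<open>b1 < 0\<close> \<open>b2 > 0\<close>
    by (intro orthant_nonzero_add orthant_scaleR) auto
  ultimately show False
    using FP by blast
qed

lemma feasible_nonempty_iff_slack:
  "feasible G v \<noteq> {} \<longleftrightarrow> (\<exists>y\<in>orthant. v - y \<in> range (\<lambda>x. G *v x))"
proof
  assume "feasible G v \<noteq> {}"
  then obtain x where "\<forall>i. (G *v x) $ i \<le> v $ i"
    unfolding feasible_def by blast
  then have "v - G *v x \<in> orthant"
    unfolding orthant_def by simp
  then show "\<exists>y\<in>orthant. v - y \<in> range (\<lambda>x. G *v x)"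
    by force
next
  assume "\<exists>y\<in>orthant. v - y \<in> range (\<lambda>x. G *v x)"
  then obtain y x where y: "y \<in> orthant" and x: "v - y = G *v x"
    by blast
  have "(G *v x) $ i = v $ i - y $ i" for i
    unfolding x[symmetric] by simp
  with y have "(G *v x) $ i \<le> v $ i" for i
    unfolding orthant_def by simp
  then have "x \<in> feasible G v"
    unfolding feasible_def by blast
  then show "feasible G v \<noteq> {}"
    by blast
qed

lemma orthant_meets_coset_iff:
  assumes F: "subspace F" and u: "u \<notin> F"
  shows "(\<exists>y\<in>orthant. y - u \<in> F) \<longleftrightarrow>
         (\<exists>y\<in>ext_space u F \<inter> orthant. beta_coeff u F y > 0)"
proof
  assume "\<exists>y\<in>orthant. y - u \<in> F"
  then obtain y where y: "y \<in> orthant" "y - u \<in> F"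
    by blast
  have "y = 1 *\<^sub>R u + (y - u)"
    by simp
  then show "\<exists>y\<in>ext_space u F \<inter> orthant. beta_coeff u F y > 0"
    using y ext_spaceI[OF y(2), of 1 u] beta_coeff_eq[OF F u y(2), of 1] by force
next
  assume "\<exists>y\<in>ext_space u F \<inter> orthant. beta_coeff u F y > 0"
  then obtain y where y: "y \<in> ext_space u F" "y \<in> orthant" "beta_coeff u F y > 0"
    by blast
  then obtain b z where z: "z \<in> F" and yz: "y = b *\<^sub>R u + z"
    by (blast elim: ext_spaceE)
  with y(3) have b: "b > 0"
    using beta_coeff_eq[OF F u z] by simp
  have "(1 / b) *\<^sub>R y - u = (1 / b) *\<^sub>R z"
    using b unfolding yz by (simp add: algebra_simps)
  then have "(1 / b) *\<^sub>R y - u \<in> F"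
    using F z by (simp add: subspace_scale)
  moreover have "(1 / b) *\<^sub>R y \<in> orthant"
    using y(2) b by (simp add: orthant_scaleR)
  ultimately show "\<exists>y\<in>orthant. y - u \<in> F"
    by blast
qed

lemma exists_pos_beta_coeff_iff:
  assumes F: "subspace F" and u: "u \<notin> F" and FP: "F \<inter> orthant = {0}"
  shows "(\<exists>y\<in>ext_space u F \<inter> orthant. beta_coeff u F y > 0) \<longleftrightarrow>
         ext_space u F \<inter> orthant \<noteq> {0} \<and>
         (\<forall>y \<in> ext_space u F \<inter> orthant - {0}. beta_coeff u F y > 0)"
proof
  assume "\<exists>y\<in>ext_space u F \<inter> orthant. beta_coeff u F y > 0"
  then obtain y where y: "y \<in> ext_space u F \<inter> orthant" "beta_coeff u F y > 0"
    by blast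
  with beta_coeff_zero[OF F u] have "y \<in> ext_space u F \<inter> orthant - {0}"
    by auto
  with y(2) beta_coeff_sign_constant[OF F u FP]
  show "ext_space u F \<inter> orthant \<noteq> {0} \<and>
        (\<forall>y \<in> ext_space u F \<inter> orthant - {0}. beta_coeff u F y > 0)"
    by force
next
  assume pos: "ext_space u F \<inter> orthant \<noteq> {0} \<and>
               (\<forall>y \<in> ext_space u F \<inter> orthant - {0}. beta_coeff u F y > 0)"
  have "0 \<in> ext_space u F \<inter> orthant"
    unfolding orthant_def using ext_spaceI[OF subspace_0[OF F], of 0 u] by simp
  with pos obtain y where "y \<in> ext_space u F \<inter> orthant - {0}"
    by blast
  with pos show "\<exists>y\<in>ext_space u F \<inter> orthant. beta_coeff u F y > 0"
    by blast
qed

theorem mainTheorem3: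
  fixes G :: "real ^ 'm ^ 'n" and v vF ups :: "real ^ 'n"
  defines "F \<equiv> range (\<lambda>x. G *v x)"
  defines "Fe \<equiv> ext_space ups F"
  assumes vF_in: "vF \<in> F"
    and ups_perp: "\<forall>z\<in>F. ups \<bullet> z = 0"
    and decomp: "v = vF + ups"
    and ups_nz: "ups \<noteq> 0"
    and FP: "F \<inter> orthant = {0}"
  shows "(Fe \<inter> orthant \<noteq> {0} \<longrightarrow>
            (\<forall>y \<in> Fe \<inter> orthant - {0}. beta_coeff ups F y > 0) \<or>
            (\<forall>y \<in> Fe \<inter> orthant - {0}. beta_coeff ups F y < 0))
      \<and> (feasible G v \<noteq> {} \<longleftrightarrow>
            Fe \<inter> orthant \<noteq> {0} \<and> (\<forall>y \<in> Fe \<inter> orthant - {0}. beta_coeff ups F y > 0))"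
proof -
  have F: "subspace F"
    unfolding F_def using linear_subspace_image[OF matrix_vector_mul_linear subspace_UNIV, of G]
    by simp
  have u: "ups \<notin> F"
    using ups_perp ups_nz inner_eq_zero_iff by blast
  have "v - y \<in> F \<longleftrightarrow> y - ups \<in> F" for y
  proof -
    have "v - y = vF - (y - ups)" "y - ups = vF - (v - y)"
      unfolding decomp by (simp_all add: algebra_simps)
    then show ?thesis
      using F vF_in by (metis subspace_diff)
  qed
  then have "feasible G v \<noteq> {} \<longleftrightarrow> (\<exists>y\<in>orthant. y - ups \<in> F)"
    unfolding feasible_nonempty_iff_slack F_def[symmetric] by blast
  also have "\<dots> \<longleftrightarrow> (\<exists>y\<in>Fe \<inter> orthant. beta_coeff ups F y > 0)"
    unfolding Fe_def by (rule orthant_meets_coset_iff[OF F u])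
  also have "\<dots> \<longleftrightarrow> Fe \<inter> orthant \<noteq> {0} \<and> (\<forall>y \<in> Fe \<inter> orthant - {0}. beta_coeff ups F y > 0)"
    unfolding Fe_def by (rule exists_pos_beta_coeff_iff[OF F u FP])
  finally show ?thesis
    using beta_coeff_sign_constant[OF F u FP] unfolding Fe_def by blast
qed

end
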